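(* Let $0\le\alpha\le1/L$ and $0\le\beta\le 2/L-\alpha$. Then for all $n\ge1$, $$f(\theta_n)-f(\theta_* )\le\min\Big\{\frac{\|\theta_0-\theta_*\|^2}{\alpha n^2},\ \frac{4\|\theta_0-\theta_*\|^2}{(\alpha+\beta)n}\Big\},$$ where a term with zero denominator is interpreted as $+\infty$.
   Context: Let $H\in\mathbb{R}^{d\times d}$ be symmetric positive definite with largest eigenvalue $L$, $q\in\mathbb{R}^d$, $f(\theta)=\frac12\langle\theta,H\theta\rangle-\langle q,\theta\rangle$, $\theta_*=H^{-1}q$. For parameters $\alpha,\beta\in\mathbb{R}$, given $\theta_0\in\mathbb{R}^d$, set $\theta_1=\theta_0$ and for $n\ge1$ $$\theta_{n+1}=\frac{2n}{n+1}\theta_n-\frac{n-1}{n+1}\theta_{n-1}-\frac{1}{n+1}\Big(n(\alpha+\beta)H(\theta_n-\theta_* )-(n-1)\beta H(\theta_{n-1}-\theta_* )\Big)$$ (equivalently $-\frac{n\alpha+\beta}{n+1}f'(\omega_n)$ with $\omega_n=\frac{n(\alpha+\beta)\theta_n-(n-1)\beta\theta_{n-1}}{n\alpha+\beta}$ when $n\alpha+\beta\ne0$). *)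

theory Defs
  imports "HOL-Analysis.Analysis"
begin

definition quad_obj :: "real^'n^'n \<Rightarrow> real^'n \<Rightarrow> real^'n \<Rightarrow> real" where
  "quad_obj H q \<theta> = (1/2) * (\<theta> \<bullet> (H *v \<theta>)) - q \<bullet> \<theta>"

definition is_eigenvalue :: "real^'n^'n \<Rightarrow> real \<Rightarrow> bool" where
  "is_eigenvalue H lam \<longleftrightarrow> (\<exists>v. v \<noteq> 0 \<and> H *v v = lam *\<^sub>R v)"

definition is_largest_eigenvalue :: "real^'n^'n \<Rightarrow> real \<Rightarrow> bool" where
  "is_largest_eigenvalue H L \<longleftrightarrow>
     is_eigenvalue H L \<and> (\<forall>lam. is_eigenvalue H lam \<longrightarrow> lam \<le> L)"

definition sym_pos_def_mat :: "real^'n^'n \<Rightarrow> bool" where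
  "sym_pos_def_mat H \<longleftrightarrow> transpose H = H \<and> (\<forall>x. x \<noteq> 0 \<longrightarrow> x \<bullet> (H *v x) > 0)"

fun theta_iter :: "real^'n^'n \<Rightarrow> real^'n \<Rightarrow> real \<Rightarrow> real \<Rightarrow> real^'n \<Rightarrow> nat \<Rightarrow> real^'n" where
  "theta_iter H ts \<alpha> \<beta> \<theta>0 0 = \<theta>0"
| "theta_iter H ts \<alpha> \<beta> \<theta>0 (Suc 0) = \<theta>0"
| "theta_iter H ts \<alpha> \<beta> \<theta>0 (Suc (Suc k)) =
     (let m = real (Suc k);
          x = theta_iter H ts \<alpha> \<beta> \<theta>0 (Suc k);
          y = theta_iter H ts \<alpha> \<beta> \<theta>0 k
      in (2*m/(m+1)) *\<^sub>R x - ((m-1)/(m+1)) *\<^sub>R y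
         - (1/(m+1)) *\<^sub>R (m*(\<alpha>+\<beta>)) *\<^sub>R (H *v (x - ts))
         + (1/(m+1)) *\<^sub>R ((m-1)*\<beta>) *\<^sub>R (H *v (y - ts)))"

end

theory Submission
  imports Defs
begin

text \<open>The scaled errors \<open>\<psi>\<^sub>k = k (\<theta>\<^sub>k - \<theta>\<^sub>*)\<close> obey the linear recursion
  \<open>\<psi>\<^sub>k\<^sub>+\<^sub>2 = 2\<psi>\<^sub>k\<^sub>+\<^sub>1 - \<psi>\<^sub>k - (\<alpha>+\<beta>)H\<psi>\<^sub>k\<^sub>+\<^sub>1 + \<beta>H\<psi>\<^sub>k\<close> with \<open>\<psi>\<^sub>0 = 0\<close>, a discretised damped
  oscillator. With \<open>v\<^sub>k = \<psi>\<^sub>k\<^sub>+\<^sub>1 - \<psi>\<^sub>k\<close>, the energy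
  \<open>\<alpha>\<langle>\<psi>,H\<psi>\<rangle> + (\<alpha>+\<beta>)\<beta>/2 \<parallel>H\<psi>\<parallel>\<^sup>2 + (\<alpha>+\<beta>)\<langle>\<psi>,Hv\<rangle> + \<parallel>v\<parallel>\<^sup>2\<close> does not increase as long as
  \<open>(\<alpha>+\<beta>)L \<le> 2\<close>, because \<open>\<parallel>Hx\<parallel>\<^sup>2 \<le> L\<langle>x,Hx\<rangle>\<close>; initially it equals \<open>\<parallel>\<theta>\<^sub>0 - \<theta>\<^sub>*\<parallel>\<^sup>2\<close>.
  Completing the square, the energy is
  \<open>\<parallel>v + (\<alpha>+\<beta>)/2 H\<psi>\<parallel>\<^sup>2 + \<alpha>\<langle>\<psi>,H\<psi>\<rangle> + (\<beta>\<^sup>2-\<alpha>\<^sup>2)/4 \<parallel>H\<psi>\<parallel>\<^sup>2\<close>, and \<open>\<alpha>L \<le> 1\<close> makes the last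
  term at least \<open>-\<alpha>\<langle>\<psi>,H\<psi>\<rangle>/4\<close>. This bounds \<open>\<alpha>\<langle>\<psi>\<^sub>n,H\<psi>\<^sub>n\<rangle>\<close>, which is the \<open>1/n\<^sup>2\<close> rate.
  For the \<open>1/n\<close> rate, \<open>\<psi>\<^sub>k\<^sub>+\<^sub>1\<close> is the non-expansive gradient step \<open>\<psi>\<^sub>k - (\<alpha>+\<beta>)/2 H\<psi>\<^sub>k\<close>
  plus a vector of norm at most \<open>\<parallel>\<theta>\<^sub>0 - \<theta>\<^sub>*\<parallel>\<close>, so \<open>\<parallel>\<psi>\<^sub>n\<parallel> \<le> n\<parallel>\<theta>\<^sub>0 - \<theta>\<^sub>*\<parallel>\<close>; together with
  \<open>\<parallel>\<beta>H\<psi>\<^sub>n\<parallel> \<le> 2\<parallel>\<theta>\<^sub>0 - \<theta>\<^sub>*\<parallel>\<close> Cauchy-Schwarz bounds \<open>\<beta>\<langle>\<psi>\<^sub>n,H\<psi>\<^sub>n\<rangle>\<close>.\<close>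

section \<open>Symmetric and positive definite matrices\<close>

lemma inner_matrix_vector_symmetric:
  fixes H :: "real^'n^'n"
  assumes "transpose H = H"
  shows "x \<bullet> (H *v y) = (H *v x) \<bullet> y"
proof -
  have "(H *v x) \<bullet> y = (transpose H *v x) \<bullet> y" using assms by simp
  also have "\<dots> = x \<bullet> (H *v y)" by (simp add: dot_lmul_matrix)
  finally show ?thesis by simp
qed

lemma quadratic_form_add_scaleR:
  fixes H :: "real^'n^'n"
  assumes "transpose H = H"
  shows "(v + t *\<^sub>R w) \<bullet> (H *v (v + t *\<^sub>R w))
           = v \<bullet> (H *v v) + 2 * t * (w \<bullet> (H *v v)) + t\<^sup>2 * (w \<bullet> (H *v w))"
  using inner_matrix_vector_symmetric[OF assms, of v w]
  by (simp add: matrix_vector_right_distrib matrix_vector_mult_scaleR inner_add_left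
      inner_add_right algebra_simps power2_eq_square inner_commute)

lemma linear_coeff_eq_0_if_quadratic_nonpos:
  fixes c d :: real
  assumes "\<And>t. 2 * t * c + t\<^sup>2 * d \<le> 0"
  shows "c = 0"
proof (rule ccontr)
  assume "c \<noteq> 0"
  define e where "e = 1 + \<bar>d\<bar>"
  have e: "e > 0" unfolding e_def by simp
  have "e\<^sup>2 * (2 * (c/e) * c + (c/e)\<^sup>2 * d) \<le> 0"
    using assms[of "c/e"] by (simp add: mult_nonneg_nonpos)
  moreover have "e\<^sup>2 * (2 * (c/e) * c + (c/e)\<^sup>2 * d) = c\<^sup>2 * (2 * e + d)"
    using e by (simp add: field_simps power2_eq_square)
  moreover have "2 * e + d > 0" unfolding e_def by (auto simp: abs_if)
  ultimately show False using \<open>c \<noteq> 0\<close> by (metis mult_pos_pos not_le zero_less_power2)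
qed

text \<open>A maximiser \<open>v\<close> of the quadratic form on the unit sphere is an eigenvector: otherwise
  moving from \<open>v\<close> in direction \<open>Hv - Mv\<close> would increase the Rayleigh quotient to first order.\<close>

lemma quadratic_form_le_largest_eigenvalue:
  fixes H :: "real^'n^'n"
  assumes H_sym: "transpose H = H" and largest: "is_largest_eigenvalue H L"
  shows "x \<bullet> (H *v x) \<le> L * norm x ^ 2"
proof -
  let ?g = "\<lambda>x::real^'n. x \<bullet> (H *v x)"
  have cont: "continuous_on (sphere 0 1) ?g"
    by (intro continuous_intros
        continuous_on_compose2[OF matrix_vector_mult_linear_continuous_on[of UNIV H]]) auto
  obtain u :: "real^'n" where "norm u = 1" using vector_choose_size[of 1] by auto
  then have "sphere (0::real^'n) 1 \<noteq> {}" by auto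
  then obtain v where v: "v \<in> sphere 0 1" and vmax: "\<And>y. y \<in> sphere 0 1 \<Longrightarrow> ?g y \<le> ?g v"
    using continuous_attains_sup[OF compact_sphere _ cont] by blast
  define M where "M = ?g v"
  have vv: "v \<bullet> v = 1" using v by (simp add: norm_eq_sqrt_inner)
  have homogeneous: "?g y \<le> M * norm y ^ 2" for y
  proof (cases "y = 0")
    case False
    have "?g y / norm y ^ 2 = ?g ((1 / norm y) *\<^sub>R y)"
      by (simp add: matrix_vector_mult_scaleR power2_eq_square)
    also have "\<dots> \<le> M" unfolding M_def using False by (intro vmax) simp
    finally show ?thesis using False by (simp add: pos_divide_le_eq)
  qed simp
  define w where "w = H *v v - M *\<^sub>R v"
  have "2 * t * (w \<bullet> w) + t\<^sup>2 * (?g w - M * (w \<bullet> w)) \<le> 0" for t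
  proof -
    have "?g (v + t *\<^sub>R w) = M + 2 * t * (w \<bullet> (H *v v)) + t\<^sup>2 * ?g w"
      using quadratic_form_add_scaleR[OF H_sym] M_def by simp
    moreover have "norm (v + t *\<^sub>R w) ^ 2 = 1 + 2 * t * (v \<bullet> w) + t\<^sup>2 * (w \<bullet> w)"
      unfolding power2_norm_eq_inner using vv
      by (simp add: inner_add_left inner_add_right inner_commute algebra_simps power2_eq_square)
    moreover have "w \<bullet> (H *v v) = w \<bullet> w + M * (v \<bullet> w)"
      unfolding w_def by (simp add: inner_diff_left inner_diff_right inner_commute algebra_simps)
    ultimately show ?thesis using homogeneous[of "v + t *\<^sub>R w"] by (simp add: algebra_simps)
  qed
  then have "w \<bullet> w = 0" by (rule linear_coeff_eq_0_if_quadratic_nonpos)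
  then have "H *v v = M *\<^sub>R v" unfolding w_def by simp
  moreover have "v \<noteq> 0" using v by auto
  ultimately have "M \<le> L"
    using largest unfolding is_largest_eigenvalue_def is_eigenvalue_def by blast
  then show ?thesis using homogeneous[of x] by (meson mult_right_mono order_trans zero_le_power2)
qed

lemma quadratic_form_nonneg:
  fixes H :: "real^'n^'n"
  assumes "sym_pos_def_mat H"
  shows "0 \<le> x \<bullet> (H *v x)"
  using assms unfolding sym_pos_def_mat_def by (cases "x = 0") (auto intro: less_imp_le)

lemma largest_eigenvalue_pos:
  fixes H :: "real^'n^'n"
  assumes "sym_pos_def_mat H" and "is_largest_eigenvalue H L"
  shows "L > 0"
proof -
  obtain v where v: "v \<noteq> 0" "H *v v = L *\<^sub>R v"
    using assms(2) unfolding is_largest_eigenvalue_def is_eigenvalue_def by blast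
  have "0 < v \<bullet> (H *v v)" using assms(1) v(1) unfolding sym_pos_def_mat_def by blast
  also have "\<dots> = L * (v \<bullet> v)" using v(2) by simp
  finally have "0 < L * (v \<bullet> v)" .
  moreover have "0 < v \<bullet> v" using v(1) by simp
  ultimately show ?thesis by (simp add: zero_less_mult_iff)
qed

lemma norm_matrix_vector_sq_le:
  fixes H :: "real^'n^'n"
  assumes spd: "sym_pos_def_mat H" and largest: "is_largest_eigenvalue H L"
  shows "norm (H *v x) ^ 2 \<le> L * (x \<bullet> (H *v x))"
proof -
  have H_sym: "transpose H = H" using spd unfolding sym_pos_def_mat_def by blast
  have L: "L > 0" by (rule largest_eigenvalue_pos[OF spd largest])
  let ?h = "H *v x" and ?t = "- 1 / L"
  have "0 \<le> (x + ?t *\<^sub>R ?h) \<bullet> (H *v (x + ?t *\<^sub>R ?h))" by (rule quadratic_form_nonneg[OF spd])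
  also have "\<dots> = x \<bullet> ?h + 2 * ?t * (?h \<bullet> ?h) + ?t\<^sup>2 * (?h \<bullet> (H *v ?h))"
    by (rule quadratic_form_add_scaleR[OF H_sym])
  also have "\<dots> \<le> x \<bullet> ?h + 2 * ?t * (?h \<bullet> ?h) + ?t\<^sup>2 * (L * norm ?h ^ 2)"
    using quadratic_form_le_largest_eigenvalue[OF H_sym largest, of ?h] by (simp add: mult_left_mono)
  also have "\<dots> = x \<bullet> ?h - norm ?h ^ 2 / L"
    unfolding dot_square_norm using L by (simp add: field_simps power2_eq_square)
  finally show ?thesis using L by (simp add: pos_divide_le_eq mult.commute)
qed

lemma norm_gradient_step_le:
  fixes H :: "real^'n^'n"
  assumes spd: "sym_pos_def_mat H" and largest: "is_largest_eigenvalue H L"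
    and "0 \<le> s" and "s * L \<le> 2"
  shows "norm (x - (s/2) *\<^sub>R (H *v x)) \<le> norm x"
proof -
  let ?h = "H *v x"
  have form: "0 \<le> x \<bullet> ?h" by (rule quadratic_form_nonneg[OF spd])
  have "s\<^sup>2/4 * norm ?h ^ 2 \<le> s\<^sup>2/4 * (L * (x \<bullet> ?h))"
    using norm_matrix_vector_sq_le[OF spd largest] by (simp add: mult_left_mono)
  also have "\<dots> = (s/4) * ((s * L) * (x \<bullet> ?h))" by (simp add: power2_eq_square)
  also have "\<dots> \<le> (s/4) * (2 * (x \<bullet> ?h))"
    using assms(3,4) form by (intro mult_left_mono mult_right_mono) auto
  also have "\<dots> \<le> s * (x \<bullet> ?h)"
    using mult_nonneg_nonneg[OF assms(3) form] by simp
  finally have "s\<^sup>2/4 * norm ?h ^ 2 \<le> s * (x \<bullet> ?h)" .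
  moreover have "norm (x - (s/2) *\<^sub>R ?h) ^ 2 = norm x ^ 2 - s * (x \<bullet> ?h) + s\<^sup>2/4 * norm ?h ^ 2"
    unfolding power2_norm_eq_inner
    by (simp add: inner_diff_left inner_diff_right inner_commute algebra_simps power2_eq_square)
  ultimately have "norm (x - (s/2) *\<^sub>R ?h) ^ 2 \<le> norm x ^ 2" by linarith
  then show ?thesis by (rule power2_le_imp_le) simp
qed

lemma matrix_vector_matrix_inv:
  fixes H :: "real^'n^'n"
  assumes "sym_pos_def_mat H"
  shows "H *v (matrix_inv H *v q) = q"
proof -
  have "inj ((*v) H)" unfolding vec.inj_iff_eq_0
    using assms unfolding sym_pos_def_mat_def by force
  then have "invertible H"
    using invertible_left_inverse matrix_left_invertible_injective by blast
  then have "H ** matrix_inv H = mat 1"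
    unfolding invertible_def matrix_inv_def by (rule someI_ex[THEN conjunct1])
  then show ?thesis by (simp add: matrix_vector_mul_assoc)
qed

lemma quad_obj_diff_minimizer:
  fixes H :: "real^'n^'n"
  assumes H_sym: "transpose H = H" and "H *v \<theta>s = q"
  shows "quad_obj H q \<theta> - quad_obj H q \<theta>s = 1/2 * ((\<theta> - \<theta>s) \<bullet> (H *v (\<theta> - \<theta>s)))"
  using inner_matrix_vector_symmetric[OF H_sym, of \<theta> \<theta>s]
  unfolding quad_obj_def assms(2)[symmetric]
  by (simp add: matrix_vector_mult_diff_distrib inner_diff_left inner_diff_right
      inner_commute algebra_simps)

section \<open>The energy of the scaled recursion\<close>

definition energy :: "real^'n^'n \<Rightarrow> real \<Rightarrow> real \<Rightarrow> real^'n \<Rightarrow> real^'n \<Rightarrow> real" where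
  "energy H \<alpha> \<beta> p v = \<alpha> * (p \<bullet> (H *v p)) + (\<alpha> + \<beta>) * \<beta> / 2 * norm (H *v p) ^ 2
     + (\<alpha> + \<beta>) * (p \<bullet> (H *v v)) + norm v ^ 2"

lemma energy_step_eq:
  fixes H :: "real^'n^'n"
  assumes H_sym: "transpose H = H"
  shows "energy H \<alpha> \<beta> (p + v) (v - \<alpha> *\<^sub>R (H *v p) - (\<alpha> + \<beta>) *\<^sub>R (H *v v))
     + \<alpha> * \<beta> * norm (H *v p) ^ 2 + \<beta> * (v \<bullet> (H *v v)) - \<beta> * (\<alpha> + \<beta>) / 2 * norm (H *v v) ^ 2
     = energy H \<alpha> \<beta> p v"
proof -
  define h where "h = H *v p"
  define g where "g = H *v v"
  note sym_inner = inner_matrix_vector_symmetric[OF H_sym]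
  have "p \<bullet> (H *v h) = h \<bullet> h" "v \<bullet> (H *v h) = g \<bullet> h" "p \<bullet> (H *v g) = h \<bullet> g"
       "v \<bullet> (H *v g) = g \<bullet> g" "p \<bullet> g = h \<bullet> v" "g \<bullet> p = h \<bullet> v"
    using sym_inner[of p h] sym_inner[of v h] sym_inner[of p g] sym_inner[of v g] sym_inner[of p v]
    by (simp_all add: h_def g_def inner_commute)
  then show ?thesis
    unfolding energy_def power2_norm_eq_inner h_def[symmetric] g_def[symmetric]
    by (simp add: matrix_vector_right_distrib matrix_vector_mult_diff_distrib
        matrix_vector_mult_scaleR inner_add_left inner_add_right inner_diff_left inner_diff_right
        h_def[symmetric] g_def[symmetric] inner_commute algebra_simps)
qed

lemma energy_complete_square:
  fixes H :: "real^'n^'n"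
  assumes H_sym: "transpose H = H"
  shows "energy H \<alpha> \<beta> p v = norm (v + ((\<alpha> + \<beta>)/2) *\<^sub>R (H *v p)) ^ 2 + \<alpha> * (p \<bullet> (H *v p))
     + (\<beta>\<^sup>2 - \<alpha>\<^sup>2)/4 * norm (H *v p) ^ 2"
proof -
  have "p \<bullet> (H *v v) = (H *v p) \<bullet> v" by (rule inner_matrix_vector_symmetric[OF H_sym])
  then show ?thesis
    unfolding energy_def power2_norm_eq_inner
    by (simp add: inner_add_left inner_add_right inner_commute algebra_simps power2_eq_square)
       (simp add: field_simps)
qed

locale scaled_recursion =
  fixes H :: "real^'n^'n" and L \<alpha> \<beta> :: real and p :: "nat \<Rightarrow> real^'n"
  assumes spd: "sym_pos_def_mat H" and largest: "is_largest_eigenvalue H L"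
    and alpha_nonneg: "0 \<le> \<alpha>" and alpha_L: "\<alpha> * L \<le> 1"
    and beta_nonneg: "0 \<le> \<beta>" and alpha_beta_L: "(\<alpha> + \<beta>) * L \<le> 2"
    and p_0: "p 0 = 0"
    and p_rec: "\<And>k. p (Suc (Suc k))
      = 2 *\<^sub>R p (Suc k) - p k - (\<alpha> + \<beta>) *\<^sub>R (H *v p (Suc k)) + \<beta> *\<^sub>R (H *v p k)"
begin

definition v :: "nat \<Rightarrow> real^'n" where "v k = p (Suc k) - p k"

definition E :: "nat \<Rightarrow> real" where "E k = energy H \<alpha> \<beta> (p k) (v k)"

lemma H_sym: "transpose H = H"
  using spd unfolding sym_pos_def_mat_def by blast

lemma p_Suc: "p (Suc k) = p k + v k"
  unfolding v_def by simp

lemma v_Suc: "v (Suc k) = v k - \<alpha> *\<^sub>R (H *v p k) - (\<alpha> + \<beta>) *\<^sub>R (H *v v k)"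
proof -
  have "v (Suc k) = 2 *\<^sub>R (p k + v k) - p k - (\<alpha> + \<beta>) *\<^sub>R (H *v (p k + v k))
                    + \<beta> *\<^sub>R (H *v p k) - (p k + v k)"
    unfolding v_def[of "Suc k"] p_rec p_Suc[symmetric] ..
  then show ?thesis by (simp add: matrix_vector_right_distrib algebra_simps scaleR_2)
qed

lemma E_Suc_le: "E (Suc k) \<le> E k"
proof -
  let ?s = "\<alpha> + \<beta>" and ?Hv = "H *v v k"
  have "?s/2 * norm ?Hv ^ 2 \<le> ?s/2 * (L * (v k \<bullet> ?Hv))"
    using norm_matrix_vector_sq_le[OF spd largest] alpha_nonneg beta_nonneg
    by (simp add: mult_left_mono)
  also have "\<dots> = ((\<alpha> + \<beta>) * L * (v k \<bullet> ?Hv)) / 2" by simp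
  also have "\<dots> \<le> v k \<bullet> ?Hv"
    using mult_right_mono[OF alpha_beta_L quadratic_form_nonneg[OF spd, of "v k"]] by simp
  finally have "\<beta> * (?s/2 * norm ?Hv ^ 2) \<le> \<beta> * (v k \<bullet> ?Hv)"
    using beta_nonneg by (rule mult_left_mono)
  moreover have "\<beta> * ?s / 2 * norm ?Hv ^ 2 = \<beta> * (?s/2 * norm ?Hv ^ 2)" by simp
  moreover have "0 \<le> \<alpha> * \<beta> * norm (H *v p k) ^ 2"
    using alpha_nonneg beta_nonneg by simp
  ultimately show ?thesis
    using energy_step_eq[OF H_sym, of \<alpha> \<beta> "p k" "v k"] unfolding E_def p_Suc v_Suc by linarith
qed

lemma E_le_initial: "E k \<le> norm (p 1) ^ 2"
proof (induction k)
  case 0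
  show ?case unfolding E_def energy_def v_def using p_0 by simp
next
  case (Suc k)
  then show ?case using E_Suc_le[of k] by linarith
qed

lemma energy_lower_bound:
  "norm (v k + ((\<alpha> + \<beta>)/2) *\<^sub>R (H *v p k)) ^ 2 + 3/4 * \<alpha> * (p k \<bullet> (H *v p k))
     + \<beta>\<^sup>2/4 * norm (H *v p k) ^ 2 \<le> norm (p 1) ^ 2"
proof -
  let ?X = "p k \<bullet> (H *v p k)" and ?Y = "norm (H *v p k) ^ 2"
  have "\<alpha>\<^sup>2 * ?Y \<le> \<alpha>\<^sup>2 * (L * ?X)"
    using norm_matrix_vector_sq_le[OF spd largest] by (simp add: mult_left_mono)
  also have "\<dots> = \<alpha> * ((\<alpha> * L) * ?X)" by (simp add: power2_eq_square)
  also have "\<dots> \<le> \<alpha> * ?X"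
    using mult_right_mono[OF alpha_L quadratic_form_nonneg[OF spd, of "p k"]] alpha_nonneg
    by (simp add: mult_left_mono)
  finally have "\<alpha>\<^sup>2 * ?Y \<le> \<alpha> * ?X" .
  moreover have "(\<beta>\<^sup>2 - \<alpha>\<^sup>2)/4 * ?Y = \<beta>\<^sup>2/4 * ?Y - (\<alpha>\<^sup>2 * ?Y)/4"
    by (simp only: left_diff_distrib diff_divide_distrib times_divide_eq_left)
  ultimately show ?thesis
    using E_le_initial[of k] energy_complete_square[OF H_sym, of \<alpha> \<beta> "p k" "v k"]
    unfolding E_def by linarith
qed

lemma
  shows norm_shifted_v_le: "norm (v k + ((\<alpha> + \<beta>)/2) *\<^sub>R (H *v p k)) \<le> norm (p 1)"
    and alpha_quadratic_form_le: "\<alpha> * (p k \<bullet> (H *v p k)) \<le> 4/3 * norm (p 1) ^ 2"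
    and norm_beta_H_p_le: "norm (\<beta> *\<^sub>R (H *v p k)) \<le> 2 * norm (p 1)"
proof -
  let ?w = "v k + ((\<alpha> + \<beta>)/2) *\<^sub>R (H *v p k)"
  have "0 \<le> \<alpha> * (p k \<bullet> (H *v p k))"
    using alpha_nonneg quadratic_form_nonneg[OF spd] by simp
  moreover have "0 \<le> norm ?w ^ 2" "0 \<le> \<beta>\<^sup>2/4 * norm (H *v p k) ^ 2" by simp_all
  moreover note energy_lower_bound[of k]
  ultimately have "norm ?w ^ 2 \<le> norm (p 1) ^ 2"
    and "\<alpha> * (p k \<bullet> (H *v p k)) \<le> 4/3 * norm (p 1) ^ 2"
    and "\<beta>\<^sup>2 * norm (H *v p k) ^ 2 \<le> 4 * norm (p 1) ^ 2"
    by linarith+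
  then show "norm ?w \<le> norm (p 1)" "\<alpha> * (p k \<bullet> (H *v p k)) \<le> 4/3 * norm (p 1) ^ 2"
    "norm (\<beta> *\<^sub>R (H *v p k)) \<le> 2 * norm (p 1)"
    by (auto intro: power2_le_imp_le simp: power_mult_distrib)
qed

lemma norm_p_le: "norm (p k) \<le> real k * norm (p 1)"
proof (induction k)
  case (Suc k)
  let ?s = "\<alpha> + \<beta>"
  have "p (Suc k) = (p k - (?s/2) *\<^sub>R (H *v p k)) + (v k + (?s/2) *\<^sub>R (H *v p k))"
    unfolding p_Suc by simp
  then have "norm (p (Suc k))
      \<le> norm (p k - (?s/2) *\<^sub>R (H *v p k)) + norm (v k + (?s/2) *\<^sub>R (H *v p k))"
    by (metis norm_triangle_ineq)
  moreover have "norm (p k - (?s/2) *\<^sub>R (H *v p k)) \<le> norm (p k)"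
    using alpha_nonneg beta_nonneg alpha_beta_L by (intro norm_gradient_step_le[OF spd largest]) auto
  ultimately show ?case using Suc.IH norm_shifted_v_le[of k] by (simp add: algebra_simps)
qed (simp add: p_0)

lemma alpha_beta_quadratic_form_le:
  assumes "k \<ge> 1"
  shows "(\<alpha> + \<beta>) * (p k \<bullet> (H *v p k)) \<le> 8 * real k * norm (p 1) ^ 2"
proof -
  have "\<beta> * (p k \<bullet> (H *v p k)) = p k \<bullet> (\<beta> *\<^sub>R (H *v p k))" by simp
  also have "\<dots> \<le> norm (p k) * norm (\<beta> *\<^sub>R (H *v p k))" by (rule norm_cauchy_schwarz)
  also have "\<dots> \<le> (real k * norm (p 1)) * (2 * norm (p 1))"
    using norm_p_le norm_beta_H_p_le by (intro mult_mono) auto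
  finally have "\<beta> * (p k \<bullet> (H *v p k)) \<le> 2 * real k * norm (p 1) ^ 2"
    by (simp add: power2_eq_square)
  moreover have "4/3 * norm (p 1) ^ 2 \<le> 6 * real k * norm (p 1) ^ 2"
    using assms by (intro mult_right_mono) auto
  ultimately show ?thesis
    using alpha_quadratic_form_le[of k] by (simp add: distrib_right)
qed

lemma quadratic_form_rates:
  assumes "k \<ge> 1"
  shows "(\<alpha> \<noteq> 0 \<longrightarrow> (p k \<bullet> (H *v p k)) / (2 * real k ^ 2) \<le> norm (p 1) ^ 2 / (\<alpha> * real k ^ 2))
       \<and> (\<alpha> + \<beta> \<noteq> 0 \<longrightarrow>
            (p k \<bullet> (H *v p k)) / (2 * real k ^ 2) \<le> 4 * norm (p 1) ^ 2 / ((\<alpha> + \<beta>) * real k))"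
proof -
  let ?X = "p k \<bullet> (H *v p k)" and ?K = "norm (p 1) ^ 2"
  have rescale: "?X / (2 * real k ^ 2) = c * ?X / 2 / (c * real k ^ 2)"
    "?X / (2 * real k ^ 2) = c * ?X / (2 * real k) / (c * real k)" if "c > 0" for c
    using that assms by (simp_all add: field_simps power2_eq_square)
  have "?X / (2 * real k ^ 2) \<le> ?K / (\<alpha> * real k ^ 2)" if "\<alpha> \<noteq> 0"
  proof -
    have "?X / (2 * real k ^ 2) = \<alpha> * ?X / 2 / (\<alpha> * real k ^ 2)"
      using that alpha_nonneg by (intro rescale(1)) simp
    also have "\<dots> \<le> ?K / (\<alpha> * real k ^ 2)"
    proof (rule divide_right_mono)
      show "\<alpha> * ?X / 2 \<le> ?K"
        using alpha_quadratic_form_le[of k] zero_le_power2[of "norm (p 1)"] by linarith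
    qed (simp add: alpha_nonneg)
    finally show ?thesis .
  qed
  moreover have "?X / (2 * real k ^ 2) \<le> 4 * ?K / ((\<alpha> + \<beta>) * real k)" if "\<alpha> + \<beta> \<noteq> 0"
  proof -
    have "?X / (2 * real k ^ 2) = (\<alpha> + \<beta>) * ?X / (2 * real k) / ((\<alpha> + \<beta>) * real k)"
      using that alpha_nonneg beta_nonneg by (intro rescale(2)) simp
    also have "\<dots> \<le> 4 * ?K / ((\<alpha> + \<beta>) * real k)"
    proof (rule divide_right_mono)
      show "(\<alpha> + \<beta>) * ?X / (2 * real k) \<le> 4 * ?K"
        using alpha_beta_quadratic_form_le[OF assms] assms by (simp add: divide_le_eq mult_ac)
    qed (simp add: alpha_nonneg beta_nonneg)
    finally show ?thesis .
  qed
  ultimately show ?thesis by blast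
qed

end

lemma theta_iter_scaled_error_rec:
  fixes H :: "real^'n^'n" and \<theta>s \<theta>0 :: "real^'n" and \<alpha> \<beta> :: real
  defines "\<psi> \<equiv> \<lambda>k. real k *\<^sub>R (theta_iter H \<theta>s \<alpha> \<beta> \<theta>0 k - \<theta>s)"
  shows "\<psi> (Suc (Suc k))
    = 2 *\<^sub>R \<psi> (Suc k) - \<psi> k - (\<alpha> + \<beta>) *\<^sub>R (H *v \<psi> (Suc k)) + \<beta> *\<^sub>R (H *v \<psi> k)"
proof -
  define x where "x = theta_iter H \<theta>s \<alpha> \<beta> \<theta>0 (Suc k)"
  define y where "y = theta_iter H \<theta>s \<alpha> \<beta> \<theta>0 k"
  define m where "m = real (Suc k)"
  have m: "(m + 1) * (c / (m + 1)) = c" "(m + 1) * (1 / (m + 1) * c) = c" for c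
    unfolding m_def by simp_all
  have "\<psi> (Suc (Suc k)) = (m + 1) *\<^sub>R ((2*m/(m+1)) *\<^sub>R x - ((m-1)/(m+1)) *\<^sub>R y
         - (1/(m+1)) *\<^sub>R (m*(\<alpha>+\<beta>)) *\<^sub>R (H *v (x - \<theta>s))
         + (1/(m+1)) *\<^sub>R ((m-1)*\<beta>) *\<^sub>R (H *v (y - \<theta>s)) - \<theta>s)"
    unfolding \<psi>_def x_def y_def m_def by (simp add: Let_def)
  moreover have "\<psi> (Suc k) = m *\<^sub>R (x - \<theta>s)" "\<psi> k = (m - 1) *\<^sub>R (y - \<theta>s)"
    unfolding \<psi>_def m_def x_def y_def by simp_all
  ultimately show ?thesis
    apply (simp only: matrix_vector_mult_scaleR scaleR_diff_right scaleR_add_right scaleR_scaleR m)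
    apply (simp add: algebra_simps vec_eq_iff)
    done
qed

theorem corollary1:
  fixes H :: "real^'n^'n" and q \<theta>0 :: "real^'n" and L \<alpha> \<beta> :: real and n :: nat
  assumes "sym_pos_def_mat H"
    and "is_largest_eigenvalue H L"
    and "0 \<le> \<alpha>" and "\<alpha> \<le> 1/L"
    and "0 \<le> \<beta>" and "\<beta> \<le> 2/L - \<alpha>"
    and "n \<ge> 1"
  defines "\<theta>s \<equiv> matrix_inv H *v q"
  shows "(\<alpha> \<noteq> 0 \<longrightarrow>
            quad_obj H q (theta_iter H \<theta>s \<alpha> \<beta> \<theta>0 n) - quad_obj H q \<theta>s
              \<le> norm (\<theta>0 - \<theta>s)^2 / (\<alpha> * real n ^ 2))
       \<and> (\<alpha> + \<beta> \<noteq> 0 \<longrightarrow>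
            quad_obj H q (theta_iter H \<theta>s \<alpha> \<beta> \<theta>0 n) - quad_obj H q \<theta>s
              \<le> 4 * norm (\<theta>0 - \<theta>s)^2 / ((\<alpha> + \<beta>) * real n))"
proof -
  define \<psi> where "\<psi> = (\<lambda>k. real k *\<^sub>R (theta_iter H \<theta>s \<alpha> \<beta> \<theta>0 k - \<theta>s))"
  have L: "L > 0" by (rule largest_eigenvalue_pos[OF assms(1,2)])
  have "\<alpha> * L \<le> 1" "(\<alpha> + \<beta>) * L \<le> 2"
    using assms(4,6) L by (simp_all add: pos_le_divide_eq le_diff_eq add.commute)
  moreover have "\<psi> (Suc (Suc k))
      = 2 *\<^sub>R \<psi> (Suc k) - \<psi> k - (\<alpha> + \<beta>) *\<^sub>R (H *v \<psi> (Suc k)) + \<beta> *\<^sub>R (H *v \<psi> k)" for k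
    unfolding \<psi>_def by (rule theta_iter_scaled_error_rec)
  ultimately interpret scaled_recursion H L \<alpha> \<beta> \<psi>
    using assms(1,2,3,5) by unfold_locales (simp_all add: \<psi>_def)
  let ?\<eta> = "theta_iter H \<theta>s \<alpha> \<beta> \<theta>0 n - \<theta>s"
  have "quad_obj H q (theta_iter H \<theta>s \<alpha> \<beta> \<theta>0 n) - quad_obj H q \<theta>s = 1/2 * (?\<eta> \<bullet> (H *v ?\<eta>))"
    using H_sym matrix_vector_matrix_inv[OF assms(1)] unfolding \<theta>s_def
    by (rule quad_obj_diff_minimizer)
  also have "\<dots> = (\<psi> n \<bullet> (H *v \<psi> n)) / (2 * real n ^ 2)"
    using assms(7) by (simp add: \<psi>_def matrix_vector_mult_scaleR power2_eq_square)
  finally show ?thesis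
    using quadratic_form_rates[OF assms(7)] by (simp add: \<psi>_def)
qed

end
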